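(* Let $\{f_j^\lambda\}$ be a parametrized IFS satisfying (MA1)–(MA4) and (MT) (with constant $\eta$) on $U\subset\mathbb R^d$. Then for every $\lambda_0\in U$ there exists an open ball $B(\lambda_0,\varepsilon_0)\subset U$ such that for every $\omega,\tau\in\Sigma$ with $\omega_1\ne\tau_1$ there is a unit vector $e\in\mathbb R^d$ such that for every $p\in B(0,\varepsilon_0)\cap\mathrm{span}(e)^\perp$ and every $t\in J_p=\{t\in\mathbb R:p+te\in B(0,\varepsilon_0)\}$, $$|\Pi^{\lambda_0+p+te}(\omega)-\Pi^{\lambda_0+p+te}(\tau)|<\eta/2\implies\Big|\tfrac{d}{dt}\big(\Pi^{\lambda_0+p+te}(\omega)-\Pi^{\lambda_0+p+te}(\tau)\big)\Big|\ge\eta/2.$$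
   Context: Setup: $X\subset\mathbb R$ compact interval, $\mathcal A=\{1,\dots,m\}$, $\Sigma=\mathcal A^{\mathbb N}$, $\omega_1$ the first symbol of $\omega$, $f^\lambda_\omega$ compositions, $\Pi^\lambda(\mathbf i)=\lim_nf^\lambda_{\mathbf i|_n}(x)$. $U\subset\mathbb R^d$ bounded open. (MA1)–(MA4), $\delta\in(0,1)$: $f^\lambda_j$ is $C^{2+\delta}$ in $x$, $C^{1+\delta}$ in $\lambda$, with continuous mixed partials $\partial^2 f/\partial x\partial\lambda_i$, these derivatives uniformly bounded and uniformly $\delta$-Hölder in $x$ and $\lambda$; $0<\gamma_1\le|\frac d{dx}f^\lambda_j|\le\gamma_2<1$. (MT): there is $\eta>0$ such that for all $\lambda\in\overline U$ and $\mathbf i,\mathbf j$ with $i_1\ne j_1$, $|\Pi^\lambda(\mathbf i)-\Pi^\lambda(\mathbf j)|<\eta\Rightarrow|\nabla_\lambda(\Pi^\lambda(\mathbf i)-\Pi^\lambda(\mathbf j))|\ge\eta$. *)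

theory Defs
  imports "HOL-Analysis.Analysis"
begin

text \<open>Parameters lambda live in real^'d. Maps: f lambda j x, symbols j in {1..m}.
  Sigma = sequences nat => nat with values in {1..m}; omega 0 is the first symbol.\<close>

definition symseq :: "nat \<Rightarrow> (nat \<Rightarrow> nat) set" where
  "symseq m = {\<omega>. \<forall>k. \<omega> k \<in> {1..m}}"

fun fcomp :: "('p \<Rightarrow> nat \<Rightarrow> real \<Rightarrow> real) \<Rightarrow> 'p \<Rightarrow> (nat \<Rightarrow> nat) \<Rightarrow> nat \<Rightarrow> real \<Rightarrow> real" where
  "fcomp f l \<omega> 0 = id"
| "fcomp f l \<omega> (Suc n) = fcomp f l \<omega> n \<circ> f l (\<omega> n)"

definition proj :: "('p \<Rightarrow> nat \<Rightarrow> real \<Rightarrow> real) \<Rightarrow> real \<Rightarrow> 'p \<Rightarrow> (nat \<Rightarrow> nat) \<Rightarrow> real" where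
  "proj f x l \<omega> = lim (\<lambda>n. fcomp f l \<omega> n x)"

definition holder_xl ::
  "real set \<Rightarrow> (real^'d) set \<Rightarrow> real \<Rightarrow> (real^'d \<Rightarrow> real \<Rightarrow> 'b::real_normed_vector) \<Rightarrow> bool" where
  "holder_xl X U \<delta> D \<longleftrightarrow> (\<exists>C. \<forall>l\<in>U. \<forall>l'\<in>U. \<forall>x\<in>X. \<forall>x'\<in>X.
      norm (D l x - D l' x') \<le> C * (norm (l - l') powr \<delta> + \<bar>x - x'\<bar> powr \<delta>))"

definition MA :: "real set \<Rightarrow> (real^'d) set \<Rightarrow> nat \<Rightarrow> real \<Rightarrow>
    (real^'d \<Rightarrow> nat \<Rightarrow> real \<Rightarrow> real) \<Rightarrow> bool" where
  "MA X U m \<delta> f \<longleftrightarrow> 0 < \<delta> \<and> \<delta> < 1 \<and>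
    (\<forall>j\<in>{1..m}. \<forall>l\<in>U. f l j ` X \<subseteq> X) \<and>
    (\<exists>Dx Dxx Dl Dxl \<gamma>1 \<gamma>2 C.
       0 < \<gamma>1 \<and> \<gamma>1 \<le> \<gamma>2 \<and> \<gamma>2 < 1 \<and>
       (\<forall>j\<in>{1..m}. \<forall>l\<in>U. \<forall>x\<in>X.
          ((\<lambda>y. f l j y) has_real_derivative Dx l j x) (at x within X) \<and>
          ((\<lambda>y. Dx l j y) has_real_derivative Dxx l j x) (at x within X) \<and>
          ((\<lambda>l'. f l' j x) has_derivative (\<lambda>h. Dl l j x \<bullet> h)) (at l) \<and>
          ((\<lambda>l'. Dx l' j x) has_derivative (\<lambda>h. Dxl l j x \<bullet> h)) (at l) \<and>
          \<gamma>1 \<le> \<bar>Dx l j x\<bar> \<and> \<bar>Dx l j x\<bar> \<le> \<gamma>2 \<and>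
          \<bar>Dxx l j x\<bar> \<le> C \<and> norm (Dl l j x) \<le> C \<and> norm (Dxl l j x) \<le> C) \<and>
       (\<forall>j\<in>{1..m}.
          holder_xl X U \<delta> (\<lambda>l x. Dx l j x) \<and>
          holder_xl X U \<delta> (\<lambda>l x. Dxx l j x) \<and>
          holder_xl X U \<delta> (\<lambda>l x. Dl l j x) \<and>
          holder_xl X U \<delta> (\<lambda>l x. Dxl l j x)))"

definition MT :: "real set \<Rightarrow> (real^'d) set \<Rightarrow> nat \<Rightarrow>
    (real^'d \<Rightarrow> nat \<Rightarrow> real \<Rightarrow> real) \<Rightarrow> real \<Rightarrow> bool" where
  "MT X U m f \<eta> \<longleftrightarrow> 0 < \<eta> \<and>
    (\<forall>l\<in>closure U. \<forall>\<omega>\<in>symseq m. \<forall>\<tau>\<in>symseq m. \<forall>x\<in>X. \<omega> 0 \<noteq> \<tau> 0 \<longrightarrow>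
       \<bar>proj f x l \<omega> - proj f x l \<tau>\<bar> < \<eta> \<longrightarrow>
       (\<forall>G. ((\<lambda>l'. proj f x l' \<omega> - proj f x l' \<tau>) has_derivative (\<lambda>h. G \<bullet> h)) (at l)
            \<longrightarrow> \<eta> \<le> norm G))"

end

theory Submission
  imports Defs
begin

text \<open>Every estimate comes from the self-similarity
  \<open>Proj l \<omega> = f l (\<omega> 0) (Proj l (\<sigma> \<omega>))\<close>, \<open>\<sigma>\<close> the shift: a bounded quantity \<open>E\<close> on sequences
  with \<open>E \<omega> \<le> R + \<gamma> * E (\<sigma> \<omega>)\<close> and \<open>\<gamma> < 1\<close> is at most \<open>R / (1 - \<gamma>)\<close>. Applied three times
  this shows that \<open>\<lambda> \<mapsto> \<Pi>\<^sup>\<lambda>(\<omega>)\<close> is Lipschitz, that it is differentiable with gradient the series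
  obtained by unrolling the chain rule along the recursion, and that this gradient is continuous
  in \<open>\<lambda>\<close> uniformly in \<open>\<omega>\<close>. Hence near \<open>\<lambda>\<^sub>0\<close> the gradient of \<open>\<Pi>(\<omega>) - \<Pi>(\<tau>)\<close> stays within
  \<open>\<eta>/2\<close> of its value \<open>g\<^sub>0\<close> at \<open>\<lambda>\<^sub>0\<close>. If \<open>|\<Pi>(\<omega>) - \<Pi>(\<tau>)| < \<eta>\<close> at \<open>\<lambda>\<^sub>0\<close>, (MT) gives
  \<open>|g\<^sub>0| \<ge> \<eta>\<close> and \<open>e = g\<^sub>0 / |g\<^sub>0|\<close> works; otherwise \<open>|\<Pi>(\<omega>) - \<Pi>(\<tau>)| \<ge> \<eta>/2\<close> throughout the
  ball and the claim is vacuous.\<close>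

lemma contraction_recursion_bound:
  fixes E :: "'a \<Rightarrow> real"
  assumes closed: "\<And>w. w \<in> S \<Longrightarrow> s w \<in> S"
    and bounded: "\<And>w. w \<in> S \<Longrightarrow> E w \<le> B"
    and recursion: "\<And>w. w \<in> S \<Longrightarrow> E w \<le> R + q * E (s w)"
    and q: "0 \<le> q" "q < 1" and w: "w \<in> S"
  shows "E w \<le> R / (1 - q)"
proof -
  define M where "M = (SUP w\<in>S. E w)"
  have bdd: "bdd_above (E ` S)" by (rule bdd_aboveI2[where M = B]) (rule bounded)
  have le_M: "E v \<le> M" if "v \<in> S" for v unfolding M_def using cSUP_upper[OF that bdd] .
  have "M \<le> R + q * M" unfolding M_def
  proof (rule cSUP_least)
    show "S \<noteq> {}" using w by blast
    fix v assume v: "v \<in> S"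
    have "q * E (s v) \<le> q * M" using le_M[OF closed[OF v]] q by (simp add: mult_left_mono)
    then show "E v \<le> R + q * (SUP w\<in>S. E w)" using recursion[OF v] unfolding M_def by linarith
  qed
  then have "M \<le> R / (1 - q)" using q by (simp add: pos_le_divide_eq algebra_simps)
  then show ?thesis using le_M[OF w] by linarith
qed

definition equicontinuous_xl ::
  "nat set \<Rightarrow> real set \<Rightarrow> (real^'d) set \<Rightarrow> (nat \<Rightarrow> real^'d \<Rightarrow> real \<Rightarrow> 'b::real_normed_vector) \<Rightarrow> bool" where
  "equicontinuous_xl J X U D \<longleftrightarrow> (\<forall>\<epsilon>>0. \<exists>r>0. \<forall>j\<in>J. \<forall>l\<in>U. \<forall>l'\<in>U. \<forall>y\<in>X. \<forall>y'\<in>X.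
      norm (l - l') < r \<longrightarrow> \<bar>y - y'\<bar> < r \<longrightarrow> norm (D j l y - D j l' y') \<le> \<epsilon>)"

lemma holder_xl_uniform_constant:
  fixes D :: "nat \<Rightarrow> real^'d \<Rightarrow> real \<Rightarrow> 'b::real_normed_vector"
  assumes "finite J" "\<And>j. j \<in> J \<Longrightarrow> holder_xl X U \<delta> (D j)"
  shows "\<exists>C. \<forall>j\<in>J. \<forall>l\<in>U. \<forall>l'\<in>U. \<forall>y\<in>X. \<forall>y'\<in>X.
      norm (D j l y - D j l' y') \<le> C * (norm (l - l') powr \<delta> + \<bar>y - y'\<bar> powr \<delta>)"
proof -
  have "\<forall>j\<in>J. \<exists>C. \<forall>l\<in>U. \<forall>l'\<in>U. \<forall>y\<in>X. \<forall>y'\<in>X.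
      norm (D j l y - D j l' y') \<le> C * (norm (l - l') powr \<delta> + \<bar>y - y'\<bar> powr \<delta>)"
    using assms(2) unfolding holder_xl_def by blast
  then obtain C where C: "\<forall>j\<in>J. \<forall>l\<in>U. \<forall>l'\<in>U. \<forall>y\<in>X. \<forall>y'\<in>X.
      norm (D j l y - D j l' y') \<le> C j * (norm (l - l') powr \<delta> + \<bar>y - y'\<bar> powr \<delta>)"
    by metis
  have "C j * t \<le> (\<Sum>i\<in>J. \<bar>C i\<bar>) * t" if "j \<in> J" "0 \<le> t" for j t
    using member_le_sum[of j J "\<lambda>i. \<bar>C i\<bar>"] assms(1) that by (intro mult_right_mono) force+
  then show ?thesis using C by (meson add_nonneg_nonneg order_trans powr_ge_zero)
qed

lemma holder_xl_imp_equicontinuous_xl: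
  fixes D :: "nat \<Rightarrow> real^'d \<Rightarrow> real \<Rightarrow> 'b::real_normed_vector"
  assumes "finite J" "\<And>j. j \<in> J \<Longrightarrow> holder_xl X U \<delta> (D j)" "0 < \<delta>"
  shows "equicontinuous_xl J X U D"
  unfolding equicontinuous_xl_def
proof (intro allI impI)
  fix \<epsilon> :: real assume \<epsilon>: "\<epsilon> > 0"
  obtain C where C: "\<forall>j\<in>J. \<forall>l\<in>U. \<forall>l'\<in>U. \<forall>y\<in>X. \<forall>y'\<in>X.
      norm (D j l y - D j l' y') \<le> C * (norm (l - l') powr \<delta> + \<bar>y - y'\<bar> powr \<delta>)"
    using holder_xl_uniform_constant[of J X U \<delta> D] assms(1,2) by blast
  define K where "K = \<epsilon> / (2 * \<bar>C\<bar> + 1)"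
  have K: "K > 0" using \<epsilon> by (simp add: K_def)
  define r where "r = K powr (1 / \<delta>)"
  have r: "r > 0" and r_powr: "r powr \<delta> = K"
    using K assms(3) by (simp_all add: r_def powr_powr)
  have small: "t powr \<delta> \<le> K" if "0 \<le> t" "t < r" for t
    using powr_mono2[of \<delta> t r] that assms(3) r_powr by simp
  show "\<exists>r>0. \<forall>j\<in>J. \<forall>l\<in>U. \<forall>l'\<in>U. \<forall>y\<in>X. \<forall>y'\<in>X.
      norm (l - l') < r \<longrightarrow> \<bar>y - y'\<bar> < r \<longrightarrow> norm (D j l y - D j l' y') \<le> \<epsilon>"
  proof (intro exI[of _ r] conjI r ballI impI)
    fix j l l' y y' assume j: "j \<in> J" and l: "l \<in> U" "l' \<in> U" and y: "y \<in> X" "y' \<in> X"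
      and close: "norm (l - l') < r" "\<bar>y - y'\<bar> < r"
    have "norm (D j l y - D j l' y') \<le> \<bar>C\<bar> * (norm (l - l') powr \<delta> + \<bar>y - y'\<bar> powr \<delta>)"
      using C j l y by (meson abs_ge_self add_nonneg_nonneg mult_right_mono order_trans powr_ge_zero)
    also have "\<dots> \<le> \<bar>C\<bar> * (2 * K)"
      using small[OF norm_ge_zero close(1)] small[OF abs_ge_zero close(2)]
      by (intro mult_left_mono) auto
    also have "\<dots> \<le> \<epsilon>" using \<epsilon> unfolding K_def by (simp add: field_simps)
    finally show "norm (D j l y - D j l' y') \<le> \<epsilon>" .
  qed
qed

definition seq_shift :: "nat \<Rightarrow> (nat \<Rightarrow> 'a) \<Rightarrow> nat \<Rightarrow> 'a" where
  "seq_shift k \<omega> = (\<lambda>i. \<omega> (i + k))"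

lemma seq_shift_apply [simp]: "seq_shift k \<omega> i = \<omega> (i + k)"
  by (simp add: seq_shift_def)

lemma seq_shift_seq_shift [simp]: "seq_shift k (seq_shift n \<omega>) = seq_shift (k + n) \<omega>"
  by (simp add: seq_shift_def add.assoc)

lemma seq_shift_symseq: "\<omega> \<in> symseq m \<Longrightarrow> seq_shift k \<omega> \<in> symseq m"
  by (simp add: symseq_def)

lemma symseq_in_symbols: "\<omega> \<in> symseq m \<Longrightarrow> \<omega> k \<in> {1..m}"
  by (simp add: symseq_def)

lemma fcomp_Suc_left: "fcomp f l \<omega> (Suc n) = f l (\<omega> 0) \<circ> fcomp f l (seq_shift 1 \<omega>) n"
  by (induction n) (simp_all add: fun_eq_iff)

lemma onorm_inner_le_norm:
  fixes v :: "'a::{real_inner, perfect_space}"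
  shows "onorm (\<lambda>h. v \<bullet> h) \<le> norm v"
  using onorm_inner_right[OF bounded_linear_ident, of v] by (simp add: onorm_id)

lemma has_real_derivative_along_line:
  fixes F :: "'a::real_inner \<Rightarrow> real"
  assumes "(F has_derivative (\<lambda>h. g \<bullet> h)) (at (c + t *\<^sub>R e))"
  shows "((\<lambda>s. F (c + s *\<^sub>R e)) has_real_derivative g \<bullet> e) (at t)"
proof -
  have "((\<lambda>s. c + s *\<^sub>R e) has_derivative (\<lambda>s. s *\<^sub>R e)) (at t)"
    by (auto intro!: derivative_eq_intros)
  from diff_chain_at[OF this assms]
  show ?thesis by (simp add: o_def has_field_derivative_def mult_commute_abs)
qed

lemma inner_linearization_bound:
  fixes F :: "'a::{real_inner, perfect_space} \<Rightarrow> real"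
  assumes deriv: "\<And>z. z \<in> ball l \<rho> \<Longrightarrow> (F has_derivative (\<lambda>h. D z \<bullet> h)) (at z)"
    and close: "\<And>z. z \<in> ball l \<rho> \<Longrightarrow> norm (D z - D l) \<le> \<epsilon>" and h: "norm h < \<rho>"
  shows "\<bar>F (l + h) - F l - D l \<bullet> h\<bar> \<le> \<epsilon> * norm h"
proof -
  have "norm (F (l + h) - F l - (\<lambda>h. D l \<bullet> h) (l + h - l)) \<le> norm (l + h - l) * \<epsilon>"
  proof (rule differentiable_bound_linearization[where S = "ball l \<rho>" and f' = "\<lambda>z h. D z \<bullet> h"])
    show "l + t *\<^sub>R (l + h - l) \<in> ball l \<rho>" if "t \<in> {0..1}" for t
      using that h mult_left_le_one_le[of "norm h" t] by (auto simp: dist_norm)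
    show "(F has_derivative (\<lambda>h. D z \<bullet> h)) (at z within ball l \<rho>)" if "z \<in> ball l \<rho>" for z
      using deriv[OF that] by (rule has_derivative_at_withinI)
    show "onorm ((\<lambda>h. D z \<bullet> h) - (\<lambda>h. D l \<bullet> h)) \<le> \<epsilon>" if "z \<in> ball l \<rho>" for z
      using onorm_inner_le_norm[of "D z - D l"] close[OF that]
      by (simp add: fun_diff_def inner_diff_left)
    show "l \<in> ball l \<rho>" using h le_less_trans[OF norm_ge_zero h] by simp
  qed
  then show ?thesis by (simp add: mult.commute)
qed

lemma real_linearization_bound:
  fixes F :: "real \<Rightarrow> real"
  assumes deriv: "\<And>z. z \<in> {min y y'..max y y'} \<Longrightarrow>
      (F has_real_derivative F' z) (at z within {min y y'..max y y'})"
    and close: "\<And>z. z \<in> {min y y'..max y y'} \<Longrightarrow> \<bar>F' z - D\<bar> \<le> \<epsilon>"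
  shows "\<bar>F y' - F y - D * (y' - y)\<bar> \<le> \<epsilon> * \<bar>y' - y\<bar>"
proof -
  have "norm ((\<lambda>z. F z - D * z) y' - (\<lambda>z. F z - D * z) y) \<le> \<epsilon> * norm (y' - y)"
  proof (rule field_differentiable_bound[where S = "{min y y'..max y y'}" and f' = "\<lambda>z. F' z - D"])
    show "((\<lambda>z. F z - D * z) has_field_derivative F' z - D) (at z within {min y y'..max y y'})"
      if "z \<in> {min y y'..max y y'}" for z
      using deriv[OF that] by (auto intro!: derivative_eq_intros)
  qed (use close in auto)
  then show ?thesis by (simp add: algebra_simps)
qed

lemma less_divide_plus_one:
  fixes t r L :: real
  assumes "0 \<le> L" "0 \<le> t" "t < r / (L + 1)"
  shows "t < r" "L * t < r"
proof -
  have "t * (L + 1) < r" using assms by (simp add: pos_less_divide_eq)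
  then show "t < r" "L * t < r" using assms(2) mult_nonneg_nonneg[OF assms(1,2)] by (simp_all add: algebra_simps)
qed

lemma transversal_unit_direction:
  fixes F :: "'a::euclidean_space \<Rightarrow> real" and g :: "'a \<Rightarrow> 'a"
  assumes transversal: "\<bar>F c\<bar> < \<eta> \<Longrightarrow> \<eta> \<le> norm (g c)"
    and close: "\<And>l. l \<in> B \<Longrightarrow> \<bar>F l - F c\<bar> < \<eta> / 2 \<and> norm (g l - g c) \<le> \<eta> / 2"
  obtains e where "norm e = 1" and "\<And>l. l \<in> B \<Longrightarrow> \<bar>F l\<bar> < \<eta> / 2 \<Longrightarrow> \<eta> / 2 \<le> \<bar>g l \<bullet> e\<bar>"
proof (cases "\<bar>F c\<bar> < \<eta>")
  case True
  then have g0: "\<eta> \<le> norm (g c)" "0 < norm (g c)" using transversal by linarith+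
  define e where "e = (1 / norm (g c)) *\<^sub>R g c"
  have e: "norm e = 1" using g0 by (simp add: e_def)
  have "\<eta> / 2 \<le> \<bar>g l \<bullet> e\<bar>" if "l \<in> B" for l
  proof -
    have "\<bar>(g l - g c) \<bullet> e\<bar> \<le> \<eta> / 2"
      using Cauchy_Schwarz_ineq2[of "g l - g c" e] close[OF that] e by simp
    moreover have "g c \<bullet> e = norm (g c)"
      using g0 by (simp add: e_def power2_norm_eq_inner[symmetric] power2_eq_square)
    ultimately have "\<bar>g l \<bullet> e - norm (g c)\<bar> \<le> \<eta> / 2" by (simp add: inner_diff_left)
    then show ?thesis using g0 unfolding abs_le_iff by linarith
  qed
  then show thesis using that e by blast
next
  case False
  obtain e :: 'a where "e \<in> Basis" using nonempty_Basis by blast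
  moreover have "\<not> \<bar>F l\<bar> < \<eta> / 2" if "l \<in> B" for l using False close[OF that] by linarith
  ultimately show thesis using that[of e] by auto
qed

locale parametrized_ifs =
  fixes f :: "real^'d \<Rightarrow> nat \<Rightarrow> real \<Rightarrow> real"
    and Dx :: "real^'d \<Rightarrow> nat \<Rightarrow> real \<Rightarrow> real"
    and Dl :: "real^'d \<Rightarrow> nat \<Rightarrow> real \<Rightarrow> real^'d"
    and U :: "(real^'d) set" and a b \<gamma> C x :: real and m :: nat
  assumes x_in: "x \<in> {a..b}" and open_U: "open U"
    and maps_into: "\<And>j l y. j \<in> {1..m} \<Longrightarrow> l \<in> U \<Longrightarrow> y \<in> {a..b} \<Longrightarrow> f l j y \<in> {a..b}"
    and deriv_x: "\<And>j l y. j \<in> {1..m} \<Longrightarrow> l \<in> U \<Longrightarrow> y \<in> {a..b} \<Longrightarrow>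
        (f l j has_real_derivative Dx l j y) (at y within {a..b})"
    and deriv_param: "\<And>j l y. j \<in> {1..m} \<Longrightarrow> l \<in> U \<Longrightarrow> y \<in> {a..b} \<Longrightarrow>
        ((\<lambda>l'. f l' j y) has_derivative (\<lambda>h. Dl l j y \<bullet> h)) (at l)"
    and \<gamma>: "0 \<le> \<gamma>" "\<gamma> < 1" and C: "0 \<le> C"
    and Dx_bound: "\<And>j l y. j \<in> {1..m} \<Longrightarrow> l \<in> U \<Longrightarrow> y \<in> {a..b} \<Longrightarrow> \<bar>Dx l j y\<bar> \<le> \<gamma>"
    and Dl_bound: "\<And>j l y. j \<in> {1..m} \<Longrightarrow> l \<in> U \<Longrightarrow> y \<in> {a..b} \<Longrightarrow> norm (Dl l j y) \<le> C"
    and Dx_equicontinuous: "equicontinuous_xl {1..m} {a..b} U (\<lambda>j l y. Dx l j y)"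
    and Dl_equicontinuous: "equicontinuous_xl {1..m} {a..b} U (\<lambda>j l y. Dl l j y)"
begin

abbreviation Proj :: "real^'d \<Rightarrow> (nat \<Rightarrow> nat) \<Rightarrow> real" where
  "Proj l \<omega> \<equiv> proj f x l \<omega>"

definition lip :: real where
  "lip = C / (1 - \<gamma>)"

lemma lip_nonneg: "0 \<le> lip"
  using C \<gamma> by (simp add: lip_def)

definition tolerance :: "real \<Rightarrow> real" where
  "tolerance e = e * (1 - \<gamma>) / (2 * (lip + 1))"

lemma tolerance_pos: "0 < e \<Longrightarrow> 0 < tolerance e"
  using \<gamma> lip_nonneg by (simp add: tolerance_def)

lemma tolerance_contraction: "(tolerance e + tolerance e * lip) / (1 - \<gamma>) = e / 2"
proof -
  have "lip + 1 \<noteq> 0" using lip_nonneg by linarith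
  have "tolerance e + tolerance e * lip = tolerance e * (lip + 1)" by (simp add: algebra_simps)
  also have "\<dots> = e * (1 - \<gamma>) / 2"
    using \<open>lip + 1 \<noteq> 0\<close> unfolding tolerance_def by (simp add: field_simps)
  finally show ?thesis using \<gamma> by simp
qed

definition derivs_modulus :: "real \<Rightarrow> real \<Rightarrow> bool" where
  "derivs_modulus \<epsilon> r \<longleftrightarrow> (\<forall>j\<in>{1..m}. \<forall>l\<in>U. \<forall>l'\<in>U. \<forall>y\<in>{a..b}. \<forall>y'\<in>{a..b}.
      norm (l - l') < r \<longrightarrow> \<bar>y - y'\<bar> < r \<longrightarrow>
      \<bar>Dx l j y - Dx l' j y'\<bar> \<le> \<epsilon> \<and> norm (Dl l j y - Dl l' j y') \<le> \<epsilon>)"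

lemma derivs_modulusD:
  assumes "derivs_modulus \<epsilon> r" "j \<in> {1..m}" "l \<in> U" "l' \<in> U" "y \<in> {a..b}" "y' \<in> {a..b}"
    and "norm (l - l') < r" "\<bar>y - y'\<bar> < r"
  shows "\<bar>Dx l j y - Dx l' j y'\<bar> \<le> \<epsilon>" "norm (Dl l j y - Dl l' j y') \<le> \<epsilon>"
  using assms unfolding derivs_modulus_def by blast+

lemma derivs_equicontinuous:
  assumes "0 < \<epsilon>"
  shows "\<exists>r>0. derivs_modulus \<epsilon> r"
proof -
  obtain r1 where "0 < r1" and r1: "\<forall>j\<in>{1..m}. \<forall>l\<in>U. \<forall>l'\<in>U. \<forall>y\<in>{a..b}. \<forall>y'\<in>{a..b}.
      norm (l - l') < r1 \<longrightarrow> \<bar>y - y'\<bar> < r1 \<longrightarrow> norm (Dx l j y - Dx l' j y') \<le> \<epsilon>"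
    using Dx_equicontinuous assms unfolding equicontinuous_xl_def by blast
  obtain r2 where "0 < r2" and r2: "\<forall>j\<in>{1..m}. \<forall>l\<in>U. \<forall>l'\<in>U. \<forall>y\<in>{a..b}. \<forall>y'\<in>{a..b}.
      norm (l - l') < r2 \<longrightarrow> \<bar>y - y'\<bar> < r2 \<longrightarrow> norm (Dl l j y - Dl l' j y') \<le> \<epsilon>"
    using Dl_equicontinuous assms unfolding equicontinuous_xl_def by blast
  have "derivs_modulus \<epsilon> (min r1 r2)"
    unfolding derivs_modulus_def using r1 r2 by simp
  then show ?thesis using \<open>0 < r1\<close> \<open>0 < r2\<close> by (intro exI[of _ "min r1 r2"]) simp
qed

lemma f_lipschitz_x:
  assumes j: "j \<in> {1..m}" and l: "l \<in> U" and y: "y \<in> {a..b}" "y' \<in> {a..b}"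
  shows "\<bar>f l j y - f l j y'\<bar> \<le> \<gamma> * \<bar>y - y'\<bar>"
proof -
  have "norm (f l j y - f l j y') \<le> \<gamma> * norm (y - y')"
  proof (rule field_differentiable_bound[OF convex_real_interval(5) _ _ y])
    fix z assume z: "z \<in> {a..b}"
    show "(f l j has_field_derivative Dx l j z) (at z within {a..b})" using deriv_x[OF j l z] .
    show "norm (Dx l j z) \<le> \<gamma>" using Dx_bound[OF j l z] by simp
  qed
  then show ?thesis by simp
qed

lemma f_lipschitz_param:
  assumes S: "convex S" "S \<subseteq> U" "l \<in> S" "l' \<in> S" and j: "j \<in> {1..m}" and y: "y \<in> {a..b}"
  shows "\<bar>f l j y - f l' j y\<bar> \<le> C * norm (l - l')"
proof -
  have "norm ((\<lambda>l. f l j y) l - (\<lambda>l. f l j y) l') \<le> C * norm (l - l')"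
  proof (rule differentiable_bound[OF S(1) _ _ S(3,4)])
    fix z assume "z \<in> S"
    then have z: "z \<in> U" using S(2) by blast
    show "((\<lambda>l. f l j y) has_derivative (\<lambda>h. Dl z j y \<bullet> h)) (at z within S)"
      using deriv_param[OF j z y] by (rule has_derivative_at_withinI)
    show "onorm (\<lambda>h. Dl z j y \<bullet> h) \<le> C"
      using onorm_inner_le_norm Dl_bound[OF j z y] by (rule order_trans)
  qed
  then show ?thesis by simp
qed

lemma fcomp_in_and_contracting:
  assumes "l \<in> U" "\<omega> \<in> symseq m" "y \<in> {a..b}" "y' \<in> {a..b}"
  shows "fcomp f l \<omega> n y \<in> {a..b} \<and> \<bar>fcomp f l \<omega> n y - fcomp f l \<omega> n y'\<bar> \<le> \<gamma> ^ n * \<bar>y - y'\<bar>"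
  using assms(3,4)
proof (induction n arbitrary: y y')
  case 0 then show ?case by simp
next
  case (Suc n)
  have j: "\<omega> n \<in> {1..m}" using assms(2) by (rule symseq_in_symbols)
  note fy = maps_into[OF j assms(1) Suc.prems(1)] maps_into[OF j assms(1) Suc.prems(2)]
  have "\<bar>fcomp f l \<omega> (Suc n) y - fcomp f l \<omega> (Suc n) y'\<bar>
      \<le> \<gamma> ^ n * \<bar>f l (\<omega> n) y - f l (\<omega> n) y'\<bar>" using Suc.IH[OF fy] by simp
  also have "\<dots> \<le> \<gamma> ^ n * (\<gamma> * \<bar>y - y'\<bar>)"
    using f_lipschitz_x[OF j assms(1) Suc.prems] \<gamma> by (intro mult_left_mono) auto
  finally show ?case using Suc.IH[OF fy] by (simp add: ac_simps)
qed

lemma proj_LIMSEQ: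
  assumes l: "l \<in> U" and \<omega>: "\<omega> \<in> symseq m"
  shows "(\<lambda>n. fcomp f l \<omega> n x) \<longlonglongrightarrow> Proj l \<omega>"
proof -
  define X where "X n = fcomp f l \<omega> n x" for n
  have "norm (X (Suc n) - X n) \<le> (b - a) * \<gamma> ^ n" for n
  proof -
    have fx: "f l (\<omega> n) x \<in> {a..b}" using maps_into[OF symseq_in_symbols[OF \<omega>] l x_in] .
    have "\<bar>X (Suc n) - X n\<bar> \<le> \<gamma> ^ n * \<bar>f l (\<omega> n) x - x\<bar>"
      using fcomp_in_and_contracting[OF l \<omega> fx x_in] by (simp add: X_def)
    also have "\<dots> \<le> \<gamma> ^ n * (b - a)" using fx x_in \<gamma> by (intro mult_left_mono) auto
    finally show ?thesis by (simp add: mult.commute)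
  qed
  moreover have "summable (\<lambda>n. (b - a) * \<gamma> ^ n)" using \<gamma> by simp
  ultimately have "summable (\<lambda>n. X (Suc n) - X n)" by (rule summable_comparison_test'[rotated])
  then have "(\<lambda>n. (\<Sum>i<n. X (Suc i) - X i) + X 0) \<longlonglongrightarrow> (\<Sum>i. X (Suc i) - X i) + X 0"
    by (intro tendsto_add summable_LIMSEQ tendsto_const)
  then have "convergent X" by (auto simp: convergent_def sum_lessThan_telescope)
  then show ?thesis unfolding proj_def X_def[symmetric] by (simp add: convergent_LIMSEQ_iff)
qed

lemma proj_in_interval:
  assumes "l \<in> U" "\<omega> \<in> symseq m"
  shows "Proj l \<omega> \<in> {a..b}"
proof -
  have "fcomp f l \<omega> n x \<in> {a..b}" for n
    using fcomp_in_and_contracting[OF assms x_in x_in] by blast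
  then show ?thesis
    using LIMSEQ_le_const[OF proj_LIMSEQ[OF assms]] LIMSEQ_le_const2[OF proj_LIMSEQ[OF assms]]
    by auto
qed

lemma proj_unfold:
  assumes l: "l \<in> U" and \<omega>: "\<omega> \<in> symseq m"
  shows "Proj l \<omega> = f l (\<omega> 0) (Proj l (seq_shift 1 \<omega>))"
proof -
  have \<omega>1: "seq_shift 1 \<omega> \<in> symseq m" using \<omega> by (rule seq_shift_symseq)
  have "continuous_on {a..b} (f l (\<omega> 0))"
    using deriv_x[OF symseq_in_symbols[OF \<omega>] l] by (intro DERIV_continuous_on) auto
  then have "(\<lambda>n. f l (\<omega> 0) (fcomp f l (seq_shift 1 \<omega>) n x)) \<longlonglongrightarrow> f l (\<omega> 0) (Proj l (seq_shift 1 \<omega>))"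
    using continuous_on_tendsto_compose[OF _ proj_LIMSEQ[OF l \<omega>1] proj_in_interval[OF l \<omega>1]]
      fcomp_in_and_contracting[OF l \<omega>1 x_in x_in] by (simp add: o_def)
  moreover have "(\<lambda>n. f l (\<omega> 0) (fcomp f l (seq_shift 1 \<omega>) n x)) \<longlonglongrightarrow> Proj l \<omega>"
    using LIMSEQ_Suc[OF proj_LIMSEQ[OF l \<omega>]] by (simp only: fcomp_Suc_left o_apply)
  ultimately show ?thesis using LIMSEQ_unique by metis
qed

lemma proj_lipschitz_param:
  assumes S: "convex S" "S \<subseteq> U" and l: "l \<in> S" "l' \<in> S" and \<omega>: "\<omega> \<in> symseq m"
  shows "\<bar>Proj l \<omega> - Proj l' \<omega>\<bar> \<le> lip * norm (l - l')"
proof -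
  have lU: "l \<in> U" "l' \<in> U" using l S by auto
  have "\<bar>Proj l \<omega> - Proj l' \<omega>\<bar> \<le> C * norm (l - l') / (1 - \<gamma>)"
  proof (rule contraction_recursion_bound[where E = "\<lambda>w. \<bar>Proj l w - Proj l' w\<bar>" and s = "seq_shift 1" and B = "b - a"])
    fix w assume w: "w \<in> symseq m"
    then show "seq_shift 1 w \<in> symseq m" by (rule seq_shift_symseq)
    show "\<bar>Proj l w - Proj l' w\<bar> \<le> b - a"
      using proj_in_interval[OF lU(1) w] proj_in_interval[OF lU(2) w] by auto
    define y y' where "y = Proj l (seq_shift 1 w)" and "y' = Proj l' (seq_shift 1 w)"
    have y: "y \<in> {a..b}" "y' \<in> {a..b}"
      using proj_in_interval lU seq_shift_symseq[OF w] by (auto simp: y_def y'_def)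
    have "\<bar>Proj l w - Proj l' w\<bar> \<le> \<bar>f l (w 0) y - f l' (w 0) y\<bar> + \<bar>f l' (w 0) y - f l' (w 0) y'\<bar>"
      using proj_unfold[OF lU(1) w] proj_unfold[OF lU(2) w] by (simp add: y_def y'_def)
    also have "\<dots> \<le> C * norm (l - l') + \<gamma> * \<bar>y - y'\<bar>"
      using f_lipschitz_param[OF S l symseq_in_symbols[OF w] y(1)]
        f_lipschitz_x[OF symseq_in_symbols[OF w] lU(2) y] by (rule add_mono)
    finally show "\<bar>Proj l w - Proj l' w\<bar>
        \<le> C * norm (l - l') + \<gamma> * \<bar>Proj l (seq_shift 1 w) - Proj l' (seq_shift 1 w)\<bar>"
      by (simp add: y_def y'_def)
  qed (use \<gamma> \<omega> in auto)
  then show ?thesis by (simp add: lip_def)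
qed

definition grad_term :: "real^'d \<Rightarrow> (nat \<Rightarrow> nat) \<Rightarrow> nat \<Rightarrow> real^'d" where
  "grad_term l \<omega> k = (\<Prod>i<k. Dx l (\<omega> i) (Proj l (seq_shift (Suc i) \<omega>)))
     *\<^sub>R Dl l (\<omega> k) (Proj l (seq_shift (Suc k) \<omega>))"

definition grad :: "real^'d \<Rightarrow> (nat \<Rightarrow> nat) \<Rightarrow> real^'d" where
  "grad l \<omega> = (\<Sum>k. grad_term l \<omega> k)"

lemma grad_term_norm_le:
  assumes l: "l \<in> U" and \<omega>: "\<omega> \<in> symseq m"
  shows "norm (grad_term l \<omega> k) \<le> C * \<gamma> ^ k"
proof -
  note y = proj_in_interval[OF l seq_shift_symseq[OF \<omega>]]
  have "\<bar>\<Prod>i<k. Dx l (\<omega> i) (Proj l (seq_shift (Suc i) \<omega>))\<bar> \<le> (\<Prod>i<k. \<gamma>)"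
    unfolding abs_prod using Dx_bound[OF symseq_in_symbols[OF \<omega>] l y] by (intro prod_mono) auto
  then have "\<bar>\<Prod>i<k. Dx l (\<omega> i) (Proj l (seq_shift (Suc i) \<omega>))\<bar>
      * norm (Dl l (\<omega> k) (Proj l (seq_shift (Suc k) \<omega>))) \<le> \<gamma> ^ k * C"
    using Dl_bound[OF symseq_in_symbols[OF \<omega>] l y] by (intro mult_mono) auto
  then show ?thesis by (simp add: grad_term_def mult.commute)
qed

lemma summable_norm_grad_term:
  assumes "l \<in> U" "\<omega> \<in> symseq m"
  shows "summable (\<lambda>k. norm (grad_term l \<omega> k))"
  using grad_term_norm_le[OF assms] \<gamma>
  by (intro summable_comparison_test'[where N = 0, OF summable_mult[OF summable_geometric]]) auto

lemma grad_norm_le: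
  assumes "l \<in> U" "\<omega> \<in> symseq m"
  shows "norm (grad l \<omega>) \<le> lip"
proof -
  have "norm (grad l \<omega>) \<le> (\<Sum>k. norm (grad_term l \<omega> k))"
    unfolding grad_def by (rule summable_norm[OF summable_norm_grad_term[OF assms]])
  also have "\<dots> \<le> (\<Sum>k. C * \<gamma> ^ k)"
    using grad_term_norm_le[OF assms] summable_norm_grad_term[OF assms] \<gamma>
    by (intro suminf_le) auto
  also have "\<dots> = lip" using \<gamma> by (simp add: suminf_mult suminf_geometric lip_def)
  finally show ?thesis .
qed

lemma grad_term_Suc:
  "grad_term l \<omega> (Suc k) = Dx l (\<omega> 0) (Proj l (seq_shift 1 \<omega>)) *\<^sub>R grad_term l (seq_shift 1 \<omega>) k"
  by (simp add: grad_term_def prod.lessThan_Suc_shift del: prod.lessThan_Suc)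

lemma grad_unfold:
  assumes l: "l \<in> U" and \<omega>: "\<omega> \<in> symseq m"
  shows "grad l \<omega> = Dl l (\<omega> 0) (Proj l (seq_shift 1 \<omega>))
    + Dx l (\<omega> 0) (Proj l (seq_shift 1 \<omega>)) *\<^sub>R grad l (seq_shift 1 \<omega>)"
proof -
  have summable: "summable (grad_term l \<omega>)" "summable (grad_term l (seq_shift 1 \<omega>))"
    using summable_norm_grad_term l \<omega> seq_shift_symseq by (blast intro: summable_norm_cancel)+
  have "grad l \<omega> = grad_term l \<omega> 0
      + (\<Sum>k. Dx l (\<omega> 0) (Proj l (seq_shift 1 \<omega>)) *\<^sub>R grad_term l (seq_shift 1 \<omega>) k)"
    unfolding grad_def using suminf_split_head[OF summable(1)] by (simp add: grad_term_Suc)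
  also have "\<dots> = Dl l (\<omega> 0) (Proj l (seq_shift 1 \<omega>))
      + Dx l (\<omega> 0) (Proj l (seq_shift 1 \<omega>)) *\<^sub>R grad l (seq_shift 1 \<omega>)"
    unfolding grad_def suminf_scaleR_right[OF summable(2)] by (simp add: grad_term_def)
  finally show ?thesis .
qed

lemma grad_diff_unfold_le:
  assumes l: "l \<in> U" "l' \<in> U" and \<omega>: "\<omega> \<in> symseq m"
  defines "y \<equiv> Proj l (seq_shift 1 \<omega>)" and "y' \<equiv> Proj l' (seq_shift 1 \<omega>)"
  shows "norm (grad l \<omega> - grad l' \<omega>) \<le> norm (Dl l (\<omega> 0) y - Dl l' (\<omega> 0) y')
    + \<bar>Dx l (\<omega> 0) y - Dx l' (\<omega> 0) y'\<bar> * lip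
    + \<gamma> * norm (grad l (seq_shift 1 \<omega>) - grad l' (seq_shift 1 \<omega>))"
proof -
  define A B R where "A = Dl l (\<omega> 0) y - Dl l' (\<omega> 0) y'"
    and "B = (Dx l (\<omega> 0) y - Dx l' (\<omega> 0) y') *\<^sub>R grad l (seq_shift 1 \<omega>)"
    and "R = Dx l' (\<omega> 0) y' *\<^sub>R (grad l (seq_shift 1 \<omega>) - grad l' (seq_shift 1 \<omega>))"
  have "grad l \<omega> - grad l' \<omega> = A + B + R"
    using grad_unfold[OF l(1) \<omega>] grad_unfold[OF l(2) \<omega>]
    by (simp add: A_def B_def R_def y_def y'_def algebra_simps)
  then have "norm (grad l \<omega> - grad l' \<omega>) \<le> norm A + norm B + norm R"
    using norm_triangle_ineq[of A B] norm_triangle_ineq[of "A + B" R] by simp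
  moreover have "norm B \<le> \<bar>Dx l (\<omega> 0) y - Dx l' (\<omega> 0) y'\<bar> * lip"
    using grad_norm_le[OF l(1) seq_shift_symseq[OF \<omega>]] by (simp add: B_def mult_left_mono)
  moreover have "norm R \<le> \<gamma> * norm (grad l (seq_shift 1 \<omega>) - grad l' (seq_shift 1 \<omega>))"
    using Dx_bound[OF symseq_in_symbols[OF \<omega>] l(2) proj_in_interval[OF l(2) seq_shift_symseq[OF \<omega>]]]
    by (simp add: R_def y'_def mult_right_mono)
  ultimately show ?thesis by (simp add: A_def)
qed

lemma grad_equicontinuous:
  assumes l0: "l0 \<in> U" and e: "0 < e"
  obtains \<rho> where "0 < \<rho>" "ball l0 \<rho> \<subseteq> U"
    and "\<And>l \<omega>. l \<in> ball l0 \<rho> \<Longrightarrow> \<omega> \<in> symseq m \<Longrightarrow> norm (grad l \<omega> - grad l0 \<omega>) \<le> e"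
proof -
  obtain r where r: "0 < r" and modulus: "derivs_modulus (tolerance e) r"
    using derivs_equicontinuous[OF tolerance_pos[OF e]] by blast
  obtain r1 where r1: "0 < r1" "ball l0 r1 \<subseteq> U" using open_U l0 open_contains_ball by blast
  define \<rho> where "\<rho> = min r1 (r / (lip + 1))"
  have grad_close: "norm (grad l \<omega> - grad l0 \<omega>) \<le> e" if l: "l \<in> ball l0 \<rho>" and \<omega>: "\<omega> \<in> symseq m" for l \<omega>
  proof -
    have l_r1: "l \<in> ball l0 r1" and l0_r1: "l0 \<in> ball l0 r1" using l r1 by (auto simp: \<rho>_def)
    have lU: "l \<in> U" using l_r1 r1 by blast
    have d: "norm (l - l0) < r" "lip * norm (l - l0) < r"
      using less_divide_plus_one[OF lip_nonneg norm_ge_zero] l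
      by (auto simp: \<rho>_def dist_norm norm_minus_commute)
    have "norm (grad l \<omega> - grad l0 \<omega>) \<le> (tolerance e + tolerance e * lip) / (1 - \<gamma>)"
    proof (rule contraction_recursion_bound[where E = "\<lambda>w. norm (grad l w - grad l0 w)"
          and s = "seq_shift 1" and B = "2 * lip"])
      fix w assume w: "w \<in> symseq m"
      then show w1: "seq_shift 1 w \<in> symseq m" by (rule seq_shift_symseq)
      show "norm (grad l w - grad l0 w) \<le> 2 * lip"
        using grad_norm_le[OF lU w] grad_norm_le[OF l0 w] norm_triangle_ineq4[of "grad l w" "grad l0 w"]
        by linarith
      define y y0 where "y = Proj l (seq_shift 1 w)" and "y0 = Proj l0 (seq_shift 1 w)"
      have y: "y \<in> {a..b}" "y0 \<in> {a..b}" using proj_in_interval lU l0 w1 by (auto simp: y_def y0_def)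
      have "\<bar>y - y0\<bar> \<le> lip * norm (l - l0)"
        unfolding y_def y0_def by (rule proj_lipschitz_param[OF convex_ball r1(2) l_r1 l0_r1 w1])
      then have "\<bar>y - y0\<bar> < r" using d by linarith
      note close = derivs_modulusD[OF modulus symseq_in_symbols[OF w, of 0] lU l0 y d(1) this]
      show "norm (grad l w - grad l0 w)
          \<le> tolerance e + tolerance e * lip + \<gamma> * norm (grad l (seq_shift 1 w) - grad l0 (seq_shift 1 w))"
        using grad_diff_unfold_le[OF lU l0 w] close mult_right_mono[OF close(1) lip_nonneg]
        unfolding y_def y0_def by linarith
    qed (use \<gamma> \<omega> in auto)
    then show ?thesis using tolerance_contraction e by simp
  qed
  show thesis
  proof (rule that[OF _ _ grad_close])
    show "0 < \<rho>" using r r1 lip_nonneg by (simp add: \<rho>_def)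
    show "ball l0 \<rho> \<subseteq> U" using r1 by (auto simp: \<rho>_def)
  qed
qed

lemma proj_remainder_unfold_le:
  assumes l: "l \<in> U" "l + h \<in> U" and \<omega>: "\<omega> \<in> symseq m"
  defines "j \<equiv> \<omega> 0" and "y \<equiv> Proj l (seq_shift 1 \<omega>)" and "y' \<equiv> Proj (l + h) (seq_shift 1 \<omega>)"
  shows "\<bar>Proj (l + h) \<omega> - Proj l \<omega> - grad l \<omega> \<bullet> h\<bar>
    \<le> \<bar>f (l + h) j y' - f (l + h) j y - Dx l j y * (y' - y)\<bar>
      + \<bar>f (l + h) j y - f l j y - Dl l j y \<bullet> h\<bar>
      + \<gamma> * \<bar>Proj (l + h) (seq_shift 1 \<omega>) - Proj l (seq_shift 1 \<omega>) - grad l (seq_shift 1 \<omega>) \<bullet> h\<bar>"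
proof -
  define A B where "A = f (l + h) j y' - f (l + h) j y - Dx l j y * (y' - y)"
    and "B = f (l + h) j y - f l j y - Dl l j y \<bullet> h"
  have "Proj (l + h) \<omega> - Proj l \<omega> - grad l \<omega> \<bullet> h
      = A + B + Dx l j y * (y' - y - grad l (seq_shift 1 \<omega>) \<bullet> h)"
    using proj_unfold[OF l(2) \<omega>] proj_unfold[OF l(1) \<omega>] grad_unfold[OF l(1) \<omega>]
    by (simp add: A_def B_def j_def y_def y'_def algebra_simps inner_add_left)
  moreover have "\<bar>Dx l j y\<bar> \<le> \<gamma>"
    unfolding j_def y_def
    by (rule Dx_bound[OF symseq_in_symbols[OF \<omega>] l(1) proj_in_interval[OF l(1) seq_shift_symseq[OF \<omega>]]])
  then have "\<bar>Dx l j y * (y' - y - grad l (seq_shift 1 \<omega>) \<bullet> h)\<bar>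
      \<le> \<gamma> * \<bar>y' - y - grad l (seq_shift 1 \<omega>) \<bullet> h\<bar>"
    unfolding abs_mult by (rule mult_right_mono) simp
  ultimately show ?thesis
    using abs_triangle_ineq[of "A + B"] abs_triangle_ineq[of A B]
    unfolding A_def B_def y_def y'_def by linarith
qed

lemma proj_remainder_step:
  assumes modulus: "derivs_modulus \<epsilon> r" and ball: "ball l \<rho> \<subseteq> U"
    and h: "norm h < \<rho>" "norm h < r" "lip * norm h < r" and \<omega>: "\<omega> \<in> symseq m"
  shows "\<bar>Proj (l + h) \<omega> - Proj l \<omega> - grad l \<omega> \<bullet> h\<bar> \<le> \<epsilon> * norm h + \<epsilon> * lip * norm h
    + \<gamma> * \<bar>Proj (l + h) (seq_shift 1 \<omega>) - Proj l (seq_shift 1 \<omega>) - grad l (seq_shift 1 \<omega>) \<bullet> h\<bar>"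
proof -
  have lh: "l + h \<in> ball l \<rho>" "l \<in> ball l \<rho>" using h le_less_trans[OF norm_ge_zero h(1)]
    by (auto simp: dist_norm)
  then have lU: "l \<in> U" "l + h \<in> U" using ball by blast+
  have r: "0 < r" using le_less_trans[OF norm_ge_zero h(2)] .
  define j y y' where "j = \<omega> 0" and "y = Proj l (seq_shift 1 \<omega>)"
    and "y' = Proj (l + h) (seq_shift 1 \<omega>)"
  have j: "j \<in> {1..m}" unfolding j_def by (rule symseq_in_symbols[OF \<omega>])
  have y: "y \<in> {a..b}" "y' \<in> {a..b}"
    using proj_in_interval lU seq_shift_symseq[OF \<omega>] by (auto simp: y_def y'_def)
  have \<epsilon>: "0 \<le> \<epsilon>"
    using derivs_modulusD(1)[OF modulus j lU(1) lU(1) y(1) y(1)] r by simp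
  have yy': "\<bar>y' - y\<bar> \<le> lip * norm h"
    using proj_lipschitz_param[OF convex_ball ball lh seq_shift_symseq[OF \<omega>]]
    by (simp add: y_def y'_def)
  have "\<bar>f (l + h) j y' - f (l + h) j y - Dx l j y * (y' - y)\<bar> \<le> \<epsilon> * \<bar>y' - y\<bar>"
  proof (rule real_linearization_bound[where F' = "Dx (l + h) j"])
    fix z assume z: "z \<in> {min y y'..max y y'}"
    then have "z \<in> {a..b}" using y by auto
    then show "(f (l + h) j has_real_derivative Dx (l + h) j z) (at z within {min y y'..max y y'})"
      using y by (intro DERIV_subset[OF deriv_x[OF j lU(2)]]) auto
    have "\<bar>z - y\<bar> < r" using z yy' h by auto
    then show "\<bar>Dx (l + h) j z - Dx l j y\<bar> \<le> \<epsilon>"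
      using derivs_modulusD(1)[OF modulus j lU(2) lU(1) \<open>z \<in> {a..b}\<close> y(1)] h by simp
  qed
  also have "\<dots> \<le> \<epsilon> * lip * norm h"
    using yy' \<epsilon> by (simp add: mult.assoc mult_left_mono)
  finally have first: "\<bar>f (l + h) j y' - f (l + h) j y - Dx l j y * (y' - y)\<bar> \<le> \<epsilon> * lip * norm h" .
  have second: "\<bar>f (l + h) j y - f l j y - Dl l j y \<bullet> h\<bar> \<le> \<epsilon> * norm h"
  proof (rule inner_linearization_bound[where \<rho> = "min \<rho> r"])
    fix z assume z: "z \<in> ball l (min \<rho> r)"
    then have "z \<in> U" using ball by auto
    then show "((\<lambda>l'. f l' j y) has_derivative (\<lambda>h. Dl z j y \<bullet> h)) (at z)"
      by (rule deriv_param[OF j _ y(1)])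
    have "norm (z - l) < r" using z by (simp add: dist_norm norm_minus_commute)
    then show "norm (Dl z j y - Dl l j y) \<le> \<epsilon>"
      using derivs_modulusD(2)[OF modulus j \<open>z \<in> U\<close> lU(1) y(1) y(1)] r by simp
  qed (use h in simp)
  show ?thesis
    using proj_remainder_unfold_le[OF lU \<omega>] first second
    unfolding j_def y_def y'_def by linarith
qed

lemma proj_has_derivative:
  assumes l: "l \<in> U" and \<omega>: "\<omega> \<in> symseq m"
  shows "((\<lambda>l'. Proj l' \<omega>) has_derivative (\<lambda>h. grad l \<omega> \<bullet> h)) (at l)"
  unfolding has_derivative_at_alt
proof (intro conjI allI impI)
  show "bounded_linear (\<lambda>h. grad l \<omega> \<bullet> h)" by (rule bounded_linear_inner_right)
  fix e :: real assume e: "0 < e"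
  obtain r where r: "0 < r" and modulus: "derivs_modulus (tolerance e) r"
    using derivs_equicontinuous[OF tolerance_pos[OF e]] by blast
  obtain \<rho> where \<rho>: "0 < \<rho>" "ball l \<rho> \<subseteq> U" using open_U l open_contains_ball by blast
  define d where "d = min \<rho> (r / (lip + 1))"
  show "\<exists>d>0. \<forall>l'. norm (l' - l) < d \<longrightarrow>
      norm (Proj l' \<omega> - Proj l \<omega> - grad l \<omega> \<bullet> (l' - l)) \<le> e * norm (l' - l)"
  proof (intro exI[of _ d] conjI allI impI)
    show "0 < d" using r \<rho> lip_nonneg by (simp add: d_def)
    fix l' assume "norm (l' - l) < d"
    define h where "h = l' - l"
    have h: "norm h < \<rho>" "norm h < r" "lip * norm h < r"
      using \<open>norm (l' - l) < d\<close> less_divide_plus_one[OF lip_nonneg norm_ge_zero]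
      by (auto simp: d_def h_def)
    then have "l + h \<in> U" using \<rho> by (auto simp: dist_norm)
    define rem where "rem w = \<bar>Proj (l + h) w - Proj l w - grad l w \<bullet> h\<bar>" for w
    have "rem \<omega> \<le> (tolerance e * norm h + tolerance e * lip * norm h) / (1 - \<gamma>)"
    proof (rule contraction_recursion_bound[where E = rem and s = "seq_shift 1"
          and B = "(b - a) + lip * norm h"])
      fix w assume w: "w \<in> symseq m"
      then show "seq_shift 1 w \<in> symseq m" by (rule seq_shift_symseq)
      show "rem w \<le> tolerance e * norm h + tolerance e * lip * norm h + \<gamma> * rem (seq_shift 1 w)"
        unfolding rem_def by (rule proj_remainder_step[OF modulus \<rho>(2) h w])
      have "\<bar>grad l w \<bullet> h\<bar> \<le> lip * norm h"
        using Cauchy_Schwarz_ineq2[of "grad l w" h] grad_norm_le[OF l w]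
        by (meson mult_right_mono norm_ge_zero order_trans)
      then show "rem w \<le> (b - a) + lip * norm h"
        using proj_in_interval[OF \<open>l + h \<in> U\<close> w] proj_in_interval[OF l w] by (auto simp: rem_def)
    qed (use \<gamma> \<omega> in auto)
    also have "\<dots> = (tolerance e + tolerance e * lip) / (1 - \<gamma>) * norm h"
      by (simp add: algebra_simps add_divide_distrib)
    also have "\<dots> \<le> e * norm h"
      using e by (simp add: tolerance_contraction)
    finally show "norm (Proj l' \<omega> - Proj l \<omega> - grad l \<omega> \<bullet> (l' - l)) \<le> e * norm (l' - l)"
      by (simp add: rem_def h_def)
  qed
qed

lemma proj_grad_locally_uniform:
  assumes l0: "l0 \<in> U" and \<epsilon>: "0 < \<epsilon>"
  obtains r where "0 < r" "ball l0 r \<subseteq> U"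
    and "\<And>l \<omega>. l \<in> ball l0 r \<Longrightarrow> \<omega> \<in> symseq m \<Longrightarrow>
      \<bar>Proj l \<omega> - Proj l0 \<omega>\<bar> < \<epsilon> \<and> norm (grad l \<omega> - grad l0 \<omega>) \<le> \<epsilon>"
proof -
  obtain \<rho> where \<rho>: "0 < \<rho>" "ball l0 \<rho> \<subseteq> U"
    and grad_close: "\<And>l \<omega>. l \<in> ball l0 \<rho> \<Longrightarrow> \<omega> \<in> symseq m \<Longrightarrow> norm (grad l \<omega> - grad l0 \<omega>) \<le> \<epsilon>"
    using grad_equicontinuous[OF l0 \<epsilon>] by blast
  define r where "r = min \<rho> (\<epsilon> / (lip + 1))"
  show thesis
  proof (rule that)
    show "0 < r" using \<rho> \<epsilon> lip_nonneg by (simp add: r_def)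
    show "ball l0 r \<subseteq> U" using \<rho> by (auto simp: r_def)
    fix l \<omega> assume l: "l \<in> ball l0 r" and \<omega>: "\<omega> \<in> symseq m"
    have "\<bar>Proj l \<omega> - Proj l0 \<omega>\<bar> \<le> lip * norm (l - l0)"
      using proj_lipschitz_param[OF convex_ball \<rho>(2) _ _ \<omega>] l \<rho> by (auto simp: r_def)
    also have "\<dots> < \<epsilon>"
      using less_divide_plus_one(2)[OF lip_nonneg norm_ge_zero] l
      by (auto simp: r_def dist_norm norm_minus_commute)
    finally show "\<bar>Proj l \<omega> - Proj l0 \<omega>\<bar> < \<epsilon> \<and> norm (grad l \<omega> - grad l0 \<omega>) \<le> \<epsilon>"
      using grad_close[OF _ \<omega>] l by (auto simp: r_def)
  qed
qed

lemma steep_direction: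
  assumes MT: "MT {a..b} U m f \<eta>" and l0: "l0 \<in> U"
    and \<omega>: "\<omega> \<in> symseq m" and \<tau>: "\<tau> \<in> symseq m" and first: "\<omega> 0 \<noteq> \<tau> 0"
    and close: "\<And>l \<omega>. l \<in> B \<Longrightarrow> \<omega> \<in> symseq m \<Longrightarrow>
      \<bar>Proj l \<omega> - Proj l0 \<omega>\<bar> < \<eta> / 4 \<and> norm (grad l \<omega> - grad l0 \<omega>) \<le> \<eta> / 4"
  obtains e where "norm e = 1"
    and "\<And>l. l \<in> B \<Longrightarrow> \<bar>Proj l \<omega> - Proj l \<tau>\<bar> < \<eta> / 2 \<Longrightarrow> \<eta> / 2 \<le> \<bar>(grad l \<omega> - grad l \<tau>) \<bullet> e\<bar>"
proof (rule transversal_unit_direction[where F = "\<lambda>l. Proj l \<omega> - Proj l \<tau>"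
      and g = "\<lambda>l. grad l \<omega> - grad l \<tau>" and c = l0])
  have "((\<lambda>l. Proj l \<omega> - Proj l \<tau>) has_derivative (\<lambda>h. (grad l0 \<omega> - grad l0 \<tau>) \<bullet> h)) (at l0)"
    using has_derivative_diff[OF proj_has_derivative[OF l0 \<omega>] proj_has_derivative[OF l0 \<tau>]]
    by (simp add: inner_diff_left)
  moreover have "l0 \<in> closure U" using l0 closure_subset by blast
  ultimately show "\<eta> \<le> norm (grad l0 \<omega> - grad l0 \<tau>)" if "\<bar>Proj l0 \<omega> - Proj l0 \<tau>\<bar> < \<eta>"
    using MT \<omega> \<tau> first x_in that unfolding MT_def by blast
  fix l assume l: "l \<in> B"
  have "\<bar>(Proj l \<omega> - Proj l \<tau>) - (Proj l0 \<omega> - Proj l0 \<tau>)\<bar>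
      \<le> \<bar>Proj l \<omega> - Proj l0 \<omega>\<bar> + \<bar>Proj l \<tau> - Proj l0 \<tau>\<bar>"
    using abs_triangle_ineq4[of "Proj l \<omega> - Proj l0 \<omega>" "Proj l \<tau> - Proj l0 \<tau>"] by (simp add: algebra_simps)
  moreover have "norm ((grad l \<omega> - grad l \<tau>) - (grad l0 \<omega> - grad l0 \<tau>))
      \<le> norm (grad l \<omega> - grad l0 \<omega>) + norm (grad l \<tau> - grad l0 \<tau>)"
    using norm_triangle_ineq4[of "grad l \<omega> - grad l0 \<omega>" "grad l \<tau> - grad l0 \<tau>"] by (simp add: algebra_simps)
  ultimately show "\<bar>(Proj l \<omega> - Proj l \<tau>) - (Proj l0 \<omega> - Proj l0 \<tau>)\<bar> < \<eta> / 2
      \<and> norm ((grad l \<omega> - grad l \<tau>) - (grad l0 \<omega> - grad l0 \<tau>)) \<le> \<eta> / 2"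
    using close[OF l \<omega>] close[OF l \<tau>] by linarith
qed (rule that)

lemma transversality_on_lines:
  assumes MT: "MT {a..b} U m f \<eta>" and l0: "l0 \<in> U"
  shows "\<exists>r0>0. ball l0 r0 \<subseteq> U \<and>
     (\<forall>\<omega>\<in>symseq m. \<forall>\<tau>\<in>symseq m. \<omega> 0 \<noteq> \<tau> 0 \<longrightarrow>
       (\<exists>e::real^'d. norm e = 1 \<and>
         (\<forall>p\<in>ball 0 r0. p \<bullet> e = 0 \<longrightarrow>
           (\<forall>t. p + t *\<^sub>R e \<in> ball 0 r0 \<longrightarrow>
              \<bar>Proj (l0 + p + t *\<^sub>R e) \<omega> - Proj (l0 + p + t *\<^sub>R e) \<tau>\<bar> < \<eta> / 2 \<longrightarrow>
              (\<exists>D. ((\<lambda>s. Proj (l0 + p + s *\<^sub>R e) \<omega> - Proj (l0 + p + s *\<^sub>R e) \<tau>)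
                       has_real_derivative D) (at t) \<and> \<eta> / 2 \<le> \<bar>D\<bar>)))))"
    (is "\<exists>r0>0. _ \<and> (\<forall>\<omega>\<in>_. \<forall>\<tau>\<in>_. _ \<longrightarrow> ?direction r0 \<omega> \<tau>)")
proof -
  have \<eta>: "0 < \<eta>" using MT by (simp add: MT_def)
  obtain r where r: "0 < r" "ball l0 r \<subseteq> U"
    and close: "\<And>l \<omega>. l \<in> ball l0 r \<Longrightarrow> \<omega> \<in> symseq m \<Longrightarrow>
      \<bar>Proj l \<omega> - Proj l0 \<omega>\<bar> < \<eta> / 4 \<and> norm (grad l \<omega> - grad l0 \<omega>) \<le> \<eta> / 4"
    using proj_grad_locally_uniform[OF l0, of "\<eta> / 4"] \<eta> by auto
  show ?thesis
  proof (intro exI[of _ r] conjI r ballI impI)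
    fix \<omega> \<tau> assume \<omega>: "\<omega> \<in> symseq m" and \<tau>: "\<tau> \<in> symseq m" and first: "\<omega> 0 \<noteq> \<tau> 0"
    obtain e where e: "norm e = 1" and steep: "\<And>l. l \<in> ball l0 r \<Longrightarrow>
        \<bar>Proj l \<omega> - Proj l \<tau>\<bar> < \<eta> / 2 \<Longrightarrow> \<eta> / 2 \<le> \<bar>(grad l \<omega> - grad l \<tau>) \<bullet> e\<bar>"
      using steep_direction[OF MT l0 \<omega> \<tau> first close] by blast
    show "?direction r \<omega> \<tau>"
    proof (intro exI[of _ e] conjI e ballI impI allI)
      fix p t assume "p + t *\<^sub>R e \<in> ball 0 r"
        and small: "\<bar>Proj (l0 + p + t *\<^sub>R e) \<omega> - Proj (l0 + p + t *\<^sub>R e) \<tau>\<bar> < \<eta> / 2"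
      then have l: "l0 + p + t *\<^sub>R e \<in> ball l0 r" by (simp add: dist_norm add.assoc)
      with r(2) have "l0 + p + t *\<^sub>R e \<in> U" by blast
      from has_derivative_diff[OF proj_has_derivative[OF this \<omega>] proj_has_derivative[OF this \<tau>]]
      have "((\<lambda>l. Proj l \<omega> - Proj l \<tau>) has_derivative (\<lambda>h. (grad (l0 + p + t *\<^sub>R e) \<omega>
          - grad (l0 + p + t *\<^sub>R e) \<tau>) \<bullet> h)) (at (l0 + p + t *\<^sub>R e))"
        by (simp add: inner_diff_left)
      then show "\<exists>D. ((\<lambda>s. Proj (l0 + p + s *\<^sub>R e) \<omega> - Proj (l0 + p + s *\<^sub>R e) \<tau>)
          has_real_derivative D) (at t) \<and> \<eta> / 2 \<le> \<bar>D\<bar>"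
        using has_real_derivative_along_line steep[OF l small] by blast
    qed
  qed
qed

end

lemma MA_imp_parametrized_ifs:
  fixes f :: "real^'d \<Rightarrow> nat \<Rightarrow> real \<Rightarrow> real"
  assumes "x \<in> {a..b}" "open U" "MA {a..b} U m \<delta> f"
  obtains Dx Dl \<gamma> C where "parametrized_ifs f Dx Dl U a b \<gamma> C x m"
proof -
  obtain Dx Dxx Dl Dxl \<gamma>1 \<gamma> C where
    \<gamma>: "0 < \<gamma>1" "\<gamma>1 \<le> \<gamma>" "\<gamma> < 1" and
    D: "\<forall>j\<in>{1..m}. \<forall>l\<in>U. \<forall>y\<in>{a..b}.
          ((\<lambda>z. f l j z) has_real_derivative Dx l j y) (at y within {a..b}) \<and>
          ((\<lambda>z. Dx l j z) has_real_derivative Dxx l j y) (at y within {a..b}) \<and>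
          ((\<lambda>l'. f l' j y) has_derivative (\<lambda>h. Dl l j y \<bullet> h)) (at l) \<and>
          ((\<lambda>l'. Dx l' j y) has_derivative (\<lambda>h. Dxl l j y \<bullet> h)) (at l) \<and>
          \<gamma>1 \<le> \<bar>Dx l j y\<bar> \<and> \<bar>Dx l j y\<bar> \<le> \<gamma> \<and>
          \<bar>Dxx l j y\<bar> \<le> C \<and> norm (Dl l j y) \<le> C \<and> norm (Dxl l j y) \<le> C" and
    H: "\<forall>j\<in>{1..m}.
          holder_xl {a..b} U \<delta> (\<lambda>l x. Dx l j x) \<and> holder_xl {a..b} U \<delta> (\<lambda>l x. Dxx l j x) \<and>
          holder_xl {a..b} U \<delta> (\<lambda>l x. Dl l j x) \<and> holder_xl {a..b} U \<delta> (\<lambda>l x. Dxl l j x)"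
    using assms(3) unfolding MA_def by blast
  have \<delta>: "0 < \<delta>" and maps: "\<forall>j\<in>{1..m}. \<forall>l\<in>U. f l j ` {a..b} \<subseteq> {a..b}"
    using assms(3) unfolding MA_def by blast+
  have D': "(f l j has_real_derivative Dx l j y) (at y within {a..b})
      \<and> ((\<lambda>l'. f l' j y) has_derivative (\<lambda>h. Dl l j y \<bullet> h)) (at l)
      \<and> \<bar>Dx l j y\<bar> \<le> \<gamma> \<and> norm (Dl l j y) \<le> C"
    if "j \<in> {1..m}" "l \<in> U" "y \<in> {a..b}" for j l y
    using D that by blast
  \<comment> \<open>\<open>C\<close> itself may be negative when there is no symbol, parameter or point to bound.\<close>
  have "parametrized_ifs f Dx Dl U a b \<gamma> (max C 0) x m"
  proof
    show "equicontinuous_xl {1..m} {a..b} U (\<lambda>j l y. Dx l j y)"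
      by (rule holder_xl_imp_equicontinuous_xl[OF finite_atLeastAtMost _ \<delta>]) (use H in blast)
    show "equicontinuous_xl {1..m} {a..b} U (\<lambda>j l y. Dl l j y)"
      by (rule holder_xl_imp_equicontinuous_xl[OF finite_atLeastAtMost _ \<delta>]) (use H in blast)
    show "f l j y \<in> {a..b}" if "j \<in> {1..m}" "l \<in> U" "y \<in> {a..b}" for j l y
      using maps that by blast
    show "(f l j has_real_derivative Dx l j y) (at y within {a..b})"
      and "((\<lambda>l'. f l' j y) has_derivative (\<lambda>h. Dl l j y \<bullet> h)) (at l)"
      and "\<bar>Dx l j y\<bar> \<le> \<gamma>" and "norm (Dl l j y) \<le> max C 0"
      if "j \<in> {1..m}" "l \<in> U" "y \<in> {a..b}" for j l y
      using D'[OF that] by auto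
  qed (use assms(1,2) \<gamma> in auto)
  then show thesis by (rule that)
qed

theorem mainTheorem11:
  fixes f :: "real^'d \<Rightarrow> nat \<Rightarrow> real \<Rightarrow> real"
    and U :: "(real^'d) set" and a b \<delta> \<eta> :: real and m :: nat and x :: real
  assumes "a < b" and "x \<in> {a..b}"
    and "open U" and "bounded U"
    and "MA {a..b} U m \<delta> f"
    and "MT {a..b} U m f \<eta>"
  shows "\<forall>l0\<in>U. \<exists>r0>0. ball l0 r0 \<subseteq> U \<and>
     (\<forall>\<omega>\<in>symseq m. \<forall>\<tau>\<in>symseq m. \<omega> 0 \<noteq> \<tau> 0 \<longrightarrow>
       (\<exists>e::real^'d. norm e = 1 \<and>
         (\<forall>p\<in>ball 0 r0. p \<bullet> e = 0 \<longrightarrow>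
           (\<forall>t. p + t *\<^sub>R e \<in> ball 0 r0 \<longrightarrow>
              \<bar>proj f x (l0 + p + t *\<^sub>R e) \<omega> - proj f x (l0 + p + t *\<^sub>R e) \<tau>\<bar> < \<eta> / 2 \<longrightarrow>
              (\<exists>D. ((\<lambda>s. proj f x (l0 + p + s *\<^sub>R e) \<omega> - proj f x (l0 + p + s *\<^sub>R e) \<tau>)
                       has_real_derivative D) (at t) \<and> \<eta> / 2 \<le> \<bar>D\<bar>)))))"
proof -
  obtain Dx Dl \<gamma> C where "parametrized_ifs f Dx Dl U a b \<gamma> C x m"
    using MA_imp_parametrized_ifs assms(2,3,5) by blast
  then show ?thesis using parametrized_ifs.transversality_on_lines assms(6) by blast
qed

end
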